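(* Let $\mathcal{A}$ be a Banach algebra such that $\mathrm{rad}(\mathcal{A})=\mathrm{rann}(\mathcal{A})$ and $\mathcal{A}/\mathrm{rad}(\mathcal{A})$ is commutative. Then the center $Z(\mathcal{A})$ is a closed ideal of $\mathcal{A}$.
   Context: $\mathrm{rad}(\mathcal{A})$ is the Jacobson radical and $\mathrm{rann}(\mathcal{A})=\{c\in\mathcal{A}: ac=0\ \forall a\in\mathcal{A}\}$. $Z(\mathcal{A})=\{z: za=az\ \forall a\in\mathcal{A}\}$. *)

theory Defs
  imports "HOL-Analysis.Analysis"
begin

definition left_ideal :: "'a::ring set \<Rightarrow> bool" where
  "left_ideal L \<longleftrightarrow> 0 \<in> L \<and> (\<forall>x\<in>L. \<forall>y\<in>L. x + y \<in> L) \<and> (\<forall>x\<in>L. - x \<in> L)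
     \<and> (\<forall>a. \<forall>x\<in>L. a * x \<in> L)"

definition modular_left_ideal :: "'a::ring set \<Rightarrow> bool" where
  "modular_left_ideal L \<longleftrightarrow> left_ideal L \<and> (\<exists>u. \<forall>a. a - a * u \<in> L)"

definition maximal_modular_left_ideal :: "'a::ring set \<Rightarrow> bool" where
  "maximal_modular_left_ideal L \<longleftrightarrow> modular_left_ideal L \<and> L \<noteq> UNIV \<and>
     (\<forall>J. left_ideal J \<and> L \<subseteq> J \<and> J \<noteq> UNIV \<longrightarrow> J = L)"

text \<open>Jacobson radical: intersection of all maximal modular left ideals
  (the whole algebra if there are none).\<close>
definition jacobson_rad :: "'a::ring set" where
  "jacobson_rad = \<Inter> {L. maximal_modular_left_ideal L}"

definition rann :: "'a::ring set" where
  "rann = {c. \<forall>a. a * c = 0}"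

definition center :: "'a::ring set" where
  "center = {z. \<forall>a. z * a = a * z}"

definition alg_ideal :: "'a::real_algebra set \<Rightarrow> bool" where
  "alg_ideal I \<longleftrightarrow> 0 \<in> I \<and> (\<forall>x\<in>I. \<forall>y\<in>I. x + y \<in> I) \<and> (\<forall>r. \<forall>x\<in>I. r *\<^sub>R x \<in> I)
     \<and> (\<forall>a. \<forall>x\<in>I. a * x \<in> I \<and> x * a \<in> I)"

end

theory Submission
  imports Defs
begin

lemma closed_center: "closed (center :: 'a::real_normed_algebra set)"
proof -
  have "closed (\<Inter>a. {z::'a. z * a = a * z})"
    by (intro closed_INT ballI closed_Collect_eq continuous_intros)
  moreover have "(center :: 'a set) = (\<Inter>a. {z. z * a = a * z})"
    unfolding center_def by auto
  ultimately show ?thesis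
    by simp
qed

text \<open>For central \<open>z\<close>, \<open>(a z) b - b (a z) = (a b - b a) z = z (a b - b a)\<close>,
  which vanishes once commutators are right annihilators.\<close>
lemma mult_mem_center_if_commutators_rann:
  fixes a z :: "'a::ring"
  assumes commutators: "\<forall>x y::'a. x * y - y * x \<in> rann"
    and z: "z \<in> center"
  shows "a * z \<in> center"
  unfolding center_def
proof (intro CollectI allI)
  fix b :: 'a
  have z_comm: "z * x = x * z" for x
    using z unfolding center_def by auto
  have "a * z * b - b * (a * z) = (a * b - b * a) * z"
    by (simp add: algebra_simps mult.assoc z_comm)
  also have "\<dots> = z * (a * b - b * a)"
    by (rule z_comm[symmetric])
  also have "\<dots> = 0"
    using commutators unfolding rann_def by blast
  finally show "a * z * b = b * (a * z)"
    by simp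
qed

lemma alg_ideal_center_if_commutators_rann:
  assumes "\<forall>x y::'a::real_algebra. x * y - y * x \<in> rann"
  shows "alg_ideal (center :: 'a set)"
  unfolding alg_ideal_def
proof (intro conjI ballI allI)
  fix a x :: 'a
  assume x: "x \<in> center"
  then show "a * x \<in> center"
    by (rule mult_mem_center_if_commutators_rann[OF assms])
  moreover have "x * a = a * x"
    using x by (simp add: center_def)
  ultimately show "x * a \<in> center"
    by simp
qed (auto simp: center_def algebra_simps)

theorem lemma5p2:
  assumes "(jacobson_rad :: 'a::{real_normed_algebra, banach} set) = rann"
    and "\<forall>a b::'a. a * b - b * a \<in> jacobson_rad"
  shows "closed (center :: 'a set) \<and> alg_ideal (center :: 'a set)"
proof -
  have "\<forall>a b::'a. a * b - b * a \<in> rann"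
    using assms by simp
  then show ?thesis
    by (simp add: closed_center alg_ideal_center_if_commutators_rann)
qed

end
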